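(* Let $\mathcal{N}=\{1,\dots,N\}$, $G$ a positive integer, $D>0$, and for each $n$ let $\rho_n>0$, $E_n>0$, $C_n,p\in\mathbb{R}$, with $\frac{\rho_1}{E_1}\le\cdots\le\frac{\rho_N}{E_N}$; let $F_n(\boldsymbol{x})=\rho_n\left(\frac{1}{\sqrt{G\sum_{n'}x_{n'}}}+\frac{1}{G}\right)+E_nx_n+C_n+p$ for $\boldsymbol{x}\in[0,D]^N$. Let $(\boldsymbol{x}^*,\boldsymbol{x}^{coop})$ be a pair of profiles of one of the two types described in the context. Consider the infinitely repeated game in which in every period $t=0,1,2,\dots$ each client $n$ chooses $x_n^t\in[0,D]$ (possibly depending on the history of past profiles) and minimizes its discounted total cost $\sum_{t=0}^\infty\delta^tF_n(\boldsymbol{x}^t)$ with common discount factor $\delta\in[0,1)$. For each $n$, let $\boldsymbol{x}_n^{least}$ be the profile in which every client $n'\neq n$ plays $x^{coop}_{n'}$ and client $n$ plays a minimizer of $F_n(\cdot,\boldsymbol{x}^{coop}_{-n})$ over $[0,D]$, and let $$\delta_n^{th}=\frac{F_n(\boldsymbol{x}^{coop})-F_n(\boldsymbol{x}_n^{least})}{F_n(\boldsymbol{x}^{*})-F_n(\boldsymbol{x}_n^{least})}.$$ Consider the strategy profile: all clients play $\boldsymbol{x}^{coop}$ in every period until some client deviates from it, after which all clients play $\boldsymbol{x}^*$ in all subsequent periods. If $\delta\ge\max\{\delta_n^{th}:n\in\mathcal{N}\}$, this strategy profile is a subgame perfect Nash equilibrium of the repeated game.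
   Context: Let $h_n=\sqrt[3]{\rho_n^2/(4GE_n^2)}$. Type A: $k\in\mathcal{N}$ satisfies $(N-k)D\le h_k\le(N+1-k)D$; $\boldsymbol{x}^*$ has $x_n^*=0$ ($n<k$), $x_k^*=h_k-(N-k)D$, $x_n^*=D$ ($n>k$); $S=(N-k)D+x_k^*$, and for $n<k$, $B_n=2\sqrt{GS^3}/(k-n)$, $O_n=D\sqrt{G}/(1/\sqrt{S}-1/\sqrt{(N-n)D+x_k^*})$; $l=\min\{n<k:\rho_n/E_n>B_n\}$ (assumed to exist); $x_l^{th}=D$ if $\rho_l/E_l>O_l$, and otherwise $x_l^{th}$ is the unique $y>0$ with $\rho_l/E_l=\sqrt{G}y/(1/\sqrt{S}-1/\sqrt{S+(k-l)y})$; for some $x^{coop}\in(0,x_l^{th}]$, $\boldsymbol{x}^{coop}$ has entries $0$ ($n<l$), $x^{coop}$ ($l\le n<k$), $x_k^*$ ($n=k$), $D$ ($n>k$). Type B: $m\in\{1,\dots,N-1\}$ satisfies $h_m<(N-m)D<h_{m+1}$; $\boldsymbol{x}^*$ has $x_n^*=0$ ($n\le m$), $D$ ($n>m$); $T=(N-m)D$, and for $n\le m$, $B'_n=2\sqrt{GT^3}/(m-n+1)$, $O'_n=D\sqrt{G}/(1/\sqrt{T}-1/\sqrt{(N-n+1)D})$; $l=\min\{n\le m:\rho_n/E_n>B'_n\}$ (assumed to exist); $x_l^{th}=D$ if $\rho_l/E_l>O'_l$, otherwise the unique $y>0$ with $\rho_l/E_l=\sqrt{G}y/(1/\sqrt{T}-1/\sqrt{T+(m-l+1)y})$;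 for some $x^{coop}\in(0,x_l^{th}]$, $\boldsymbol{x}^{coop}$ has entries $0$ ($n<l$), $x^{coop}$ ($l\le n\le m$), $D$ ($n>m$). In both types $\boldsymbol{x}^*$ is a Nash equilibrium of the one-shot game. A subgame perfect Nash equilibrium is a strategy profile inducing a Nash equilibrium of the continuation game after every history. *)

theory Defs
  imports "HOL-Analysis.Analysis" "HOL-Library.Extended_Real"
begin

text \<open>Clients are indexed by 1..N; a profile is a function nat => real
 (only the values at 1..N matter).\<close>

definition total :: "nat \<Rightarrow> (nat \<Rightarrow> real) \<Rightarrow> real" where
  "total N x = (\<Sum>i\<in>{1..N}. x i)"

text \<open>The one-shot cost F_n (real-valued; meaningful when the total is positive).\<close>
definition cost :: "nat \<Rightarrow> nat \<Rightarrow> (nat \<Rightarrow> real) \<Rightarrow> (nat \<Rightarrow> real) \<Rightarrow> (nat \<Rightarrow> real)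
    \<Rightarrow> real \<Rightarrow> nat \<Rightarrow> (nat \<Rightarrow> real) \<Rightarrow> real" where
  "cost N G \<rho> E C p n x =
     \<rho> n * (1 / sqrt (real G * total N x) + 1 / real G) + E n * x n + C n + p"

text \<open>Extended-real version: F_n = +infinity when the total contribution is 0
  (as 1/sqrt 0 = +infinity in the paper).\<close>
definition cost_ext :: "nat \<Rightarrow> nat \<Rightarrow> (nat \<Rightarrow> real) \<Rightarrow> (nat \<Rightarrow> real) \<Rightarrow> (nat \<Rightarrow> real)
    \<Rightarrow> real \<Rightarrow> nat \<Rightarrow> (nat \<Rightarrow> real) \<Rightarrow> ereal" where
  "cost_ext N G \<rho> E C p n x =
     (if total N x \<le> 0 then \<infinity> else ereal (cost N G \<rho> E C p n x))"

text \<open>The constant part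
  c = rho_n/G + C_n + p of F_n is summed separately, so that the remaining series has
  nonnegative terms and is well defined in the extended reals (possibly +infinity).\<close>
definition disc_cost :: "nat \<Rightarrow> nat \<Rightarrow> (nat \<Rightarrow> real) \<Rightarrow> (nat \<Rightarrow> real) \<Rightarrow> (nat \<Rightarrow> real)
    \<Rightarrow> real \<Rightarrow> real \<Rightarrow> nat \<Rightarrow> (nat \<Rightarrow> nat \<Rightarrow> real) \<Rightarrow> ereal" where
  "disc_cost N G \<rho> E C p \<delta> n pth =
     (\<Sum>t::nat. ereal (\<delta> ^ t) *
           (cost_ext N G \<rho> E C p n (pth t) - ereal (\<rho> n / real G + C n + p)))
     + ereal ((\<rho> n / real G + C n + p) / (1 - \<delta>))"

type_synonym history = "(nat \<Rightarrow> real) list"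
type_synonym strategy = "history \<Rightarrow> real"

fun hist_from :: "(nat \<Rightarrow> strategy) \<Rightarrow> history \<Rightarrow> nat \<Rightarrow> history" where
  "hist_from \<sigma> h 0 = h"
| "hist_from \<sigma> h (Suc t) = hist_from \<sigma> h t @ [(\<lambda>i. \<sigma> i (hist_from \<sigma> h t))]"

definition play :: "(nat \<Rightarrow> strategy) \<Rightarrow> history \<Rightarrow> nat \<Rightarrow> (nat \<Rightarrow> real)" where
  "play \<sigma> h t = (\<lambda>i. \<sigma> i (hist_from \<sigma> h t))"

definition valid_history :: "nat \<Rightarrow> real \<Rightarrow> history \<Rightarrow> bool" where
  "valid_history N D h \<longleftrightarrow> (\<forall>x\<in>set h. \<forall>i\<in>{1..N}. x i \<in> {0..D})"

definition is_SPNE :: "nat \<Rightarrow> nat \<Rightarrow> real \<Rightarrow> (nat \<Rightarrow> real) \<Rightarrow> (nat \<Rightarrow> real) \<Rightarrow> (nat \<Rightarrow> real)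
    \<Rightarrow> real \<Rightarrow> real \<Rightarrow> (nat \<Rightarrow> strategy) \<Rightarrow> bool" where
  "is_SPNE N G D \<rho> E C p \<delta> \<sigma> \<longleftrightarrow>
     (\<forall>i\<in>{1..N}. \<forall>h. \<sigma> i h \<in> {0..D}) \<and>
     (\<forall>h. valid_history N D h \<longrightarrow>
        (\<forall>n\<in>{1..N}. \<forall>\<tau>::strategy. (\<forall>h'. \<tau> h' \<in> {0..D}) \<longrightarrow>
           disc_cost N G \<rho> E C p \<delta> n (play \<sigma> h)
             \<le> disc_cost N G \<rho> E C p \<delta> n (play (\<sigma>(n := \<tau>)) h)))"

definition trigger :: "nat \<Rightarrow> (nat \<Rightarrow> real) \<Rightarrow> (nat \<Rightarrow> real) \<Rightarrow> nat \<Rightarrow> strategy" where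
  "trigger N xstar xcoop i h =
     (if \<forall>x\<in>set h. \<forall>j\<in>{1..N}. x j = xcoop j then xcoop i else xstar i)"

definition hval :: "nat \<Rightarrow> (nat \<Rightarrow> real) \<Rightarrow> (nat \<Rightarrow> real) \<Rightarrow> nat \<Rightarrow> real" where
  "hval G \<rho> E n = root 3 ((\<rho> n)\<^sup>2 / (4 * real G * (E n)\<^sup>2))"

definition typeA :: "nat \<Rightarrow> nat \<Rightarrow> real \<Rightarrow> (nat \<Rightarrow> real) \<Rightarrow> (nat \<Rightarrow> real)
    \<Rightarrow> (nat \<Rightarrow> real) \<Rightarrow> (nat \<Rightarrow> real) \<Rightarrow> bool" where
  "typeA N G D \<rho> E xstar xcoop \<longleftrightarrow>
    (\<exists>k\<in>{1..N}.
      let hk = hval G \<rho> E k;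
          xk = hk - (real N - real k) * D;
          S = (real N - real k) * D + xk;
          B = (\<lambda>n. 2 * sqrt (real G * S ^ 3) / (real k - real n));
          Ov = (\<lambda>n. D * sqrt (real G) /
                    (1 / sqrt S - 1 / sqrt ((real N - real n) * D + xk)));
          P = {n\<in>{1..<k}. \<rho> n / E n > B n};
          l = (LEAST n. n \<in> P);
          xth = (if \<rho> l / E l > Ov l then D
                 else (THE y. y > 0 \<and> \<rho> l / E l =
                        sqrt (real G) * y / (1 / sqrt S - 1 / sqrt (S + (real k - real l) * y))))
      in (real N - real k) * D \<le> hk \<and> hk \<le> (real N + 1 - real k) * D \<and> P \<noteq> {} \<and>
         (\<forall>n\<in>{1..N}. xstar n = (if n < k then 0 else if n = k then xk else D)) \<and>
         (\<exists>xc. 0 < xc \<and> xc \<le> xth \<and>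
            (\<forall>n\<in>{1..N}. xcoop n =
               (if n < l then 0 else if n < k then xc else if n = k then xk else D))))"

definition typeB :: "nat \<Rightarrow> nat \<Rightarrow> real \<Rightarrow> (nat \<Rightarrow> real) \<Rightarrow> (nat \<Rightarrow> real)
    \<Rightarrow> (nat \<Rightarrow> real) \<Rightarrow> (nat \<Rightarrow> real) \<Rightarrow> bool" where
  "typeB N G D \<rho> E xstar xcoop \<longleftrightarrow>
    (\<exists>m\<in>{1..N-1}.
      let T = (real N - real m) * D;
          B = (\<lambda>n. 2 * sqrt (real G * T ^ 3) / (real m - real n + 1));
          Ov = (\<lambda>n. D * sqrt (real G) /
                    (1 / sqrt T - 1 / sqrt ((real N - real n + 1) * D)));
          P = {n\<in>{1..m}. \<rho> n / E n > B n};
          l = (LEAST n. n \<in> P);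
          xth = (if \<rho> l / E l > Ov l then D
                 else (THE y. y > 0 \<and> \<rho> l / E l =
                        sqrt (real G) * y / (1 / sqrt T - 1 / sqrt (T + (real m - real l + 1) * y))))
      in hval G \<rho> E m < T \<and> T < hval G \<rho> E (m + 1) \<and> P \<noteq> {} \<and>
         (\<forall>n\<in>{1..N}. xstar n = (if n \<le> m then 0 else D)) \<and>
         (\<exists>xc. 0 < xc \<and> xc \<le> xth \<and>
            (\<forall>n\<in>{1..N}. xcoop n = (if n < l then 0 else if n \<le> m then xc else D))))"

text \<open>delta_n^th, where y n is client n's best response to x^coop_{-n}.\<close>
definition delta_th :: "nat \<Rightarrow> nat \<Rightarrow> (nat \<Rightarrow> real) \<Rightarrow> (nat \<Rightarrow> real) \<Rightarrow> (nat \<Rightarrow> real)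
    \<Rightarrow> real \<Rightarrow> (nat \<Rightarrow> real) \<Rightarrow> (nat \<Rightarrow> real) \<Rightarrow> (nat \<Rightarrow> real) \<Rightarrow> nat \<Rightarrow> real" where
  "delta_th N G \<rho> E C p xstar xcoop y n =
     (cost N G \<rho> E C p n xcoop - cost N G \<rho> E C p n (xcoop(n := y n))) /
     (cost N G \<rho> E C p n xstar - cost N G \<rho> E C p n (xcoop(n := y n)))"

end

theory Submission
  imports Defs
begin

(* If every client with \<rho>_n/E_n below the critical ratio 2 sqrt G S^(3/2) of the total S
   contributes 0 and every client above it contributes D, the first-order conditions hold; as
   each F_n is convex in its own contribution, x^* is a Nash equilibrium of the stage game.  The
   profile x^coop raises the contributions of at least two clients, so after a unilateral change
   of any one client the total still exceeds that of x^*, and a best response to x^coop_{-n} is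
   strictly cheaper than x^*.  Against the grim trigger a deviation gains at most once and is
   punished by x^* forever after; \<delta> \<ge> \<delta>_n^th says exactly that this does not pay.  Off the
   path the play is x^* forever, which no unilateral deviation improves. *)

section \<open>Total contribution and the first-order condition\<close>

lemma total_fun_upd:
  assumes "n \<in> {1..N}"
  shows "total N (x(n := z)) = total N x - x n + z"
proof -
  have "(\<Sum>i\<in>{1..N} - {n}. (x(n := z)) i) = (\<Sum>i\<in>{1..N} - {n}. x i)"
    by (rule sum.cong) auto
  then show ?thesis
    using assms by (simp add: total_def sum.remove)
qed

lemma total_pos:
  assumes "\<forall>i\<in>{1..N}. 0 \<le> x i" and "j \<in> {1..N}" and "0 < x j"
  shows "0 < total N x"
  unfolding total_def using assms by (intro sum_pos2) auto

lemma total_step_profile: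
  assumes k: "k \<in> {1..N}"
    and x: "\<forall>n\<in>{1..N}. x n = (if n < k then 0 else if n = k then xk else D)"
  shows "total N x = (real N - real k) * D + xk"
proof -
  let ?f = "\<lambda>i. if i < k then 0 else if i = k then xk else D"
  have "total N x = sum ?f {1..<Suc N}"
    unfolding total_def using x by (intro sum.cong) auto
  also have "\<dots> = sum ?f {1..<k} + sum ?f {k..<Suc N}"
    using k by (intro sum.atLeastLessThan_concat[symmetric]) auto
  also have "sum ?f {k..<Suc N} = xk + sum ?f {Suc k..<Suc N}"
    using k by (subst sum.atLeast_Suc_lessThan) auto
  also have "sum ?f {Suc k..<Suc N} = sum (\<lambda>_. D) {Suc k..<Suc N}"
    by (intro sum.cong) auto
  finally show ?thesis
    using k by simp
qed

text \<open>Client n's first-order condition at total contribution u reads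
  \<rho> n / E n = critical_ratio G u.\<close>

definition critical_ratio :: "nat \<Rightarrow> real \<Rightarrow> real" where
  "critical_ratio G u = 2 * sqrt (real G) * u * sqrt u"

lemma critical_ratio_strict_mono:
  assumes "G \<ge> 1" and "0 \<le> a" and "a < b"
  shows "critical_ratio G a < critical_ratio G b"
proof -
  have "a * sqrt a < b * sqrt b"
    using assms by (intro mult_strict_mono) auto
  then show ?thesis
    using assms(1) by (simp add: critical_ratio_def mult.assoc)
qed

lemma critical_ratio_eq_sqrt:
  assumes "0 \<le> S"
  shows "2 * sqrt (real G * S ^ 3) = critical_ratio G S"
  using assms by (simp add: critical_ratio_def real_sqrt_mult power3_eq_cube)

lemma critical_ratio_hval:
  assumes "G \<ge> 1" and "\<rho> n > 0" and "E n > 0"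
  shows "0 < hval G \<rho> E n" and "critical_ratio G (hval G \<rho> E n) = \<rho> n / E n"
proof -
  define q where "q = (\<rho> n)\<^sup>2 / (4 * real G * (E n)\<^sup>2)"
  define h where "h = hval G \<rho> E n"
  have "0 < q"
    using assms by (simp add: q_def)
  moreover have "h = root 3 q"
    by (simp add: h_def hval_def q_def)
  ultimately have hpos: "0 < h" and h3: "h ^ 3 = q"
    by simp_all
  have "(critical_ratio G h)\<^sup>2 = 4 * real G * h ^ 3"
    using hpos by (simp add: critical_ratio_def power_mult_distrib power3_eq_cube)
      (simp add: power2_eq_square)
  also have "\<dots> = (\<rho> n / E n)\<^sup>2"
    using assms by (simp add: h3 q_def power_divide)
  finally have "(critical_ratio G h)\<^sup>2 = (\<rho> n / E n)\<^sup>2" .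
  moreover have "0 \<le> critical_ratio G h" and "0 \<le> \<rho> n / E n"
    using hpos assms by (simp_all add: critical_ratio_def)
  ultimately have "critical_ratio G h = \<rho> n / E n"
    by (rule power2_eq_imp_eq)
  with hpos show "0 < hval G \<rho> E n" and "critical_ratio G (hval G \<rho> E n) = \<rho> n / E n"
    by (simp_all add: h_def)
qed

text \<open>Convexity of u \<mapsto> 1 / sqrt u, in the variable s = sqrt u.\<close>

lemma inverse_ge_tangent_square:
  fixes s s0 :: real
  assumes "0 < s" and "0 < s0"
  shows "- (s\<^sup>2 - s0\<^sup>2) / (2 * s0 ^ 3) \<le> 1 / s - 1 / s0"
proof -
  have "0 \<le> (s - s0)\<^sup>2 * (s + 2 * s0) / (2 * s * s0 ^ 3)"
    using assms by simp
  also have "\<dots> = (1 / s - 1 / s0) - (- (s\<^sup>2 - s0\<^sup>2) / (2 * s0 ^ 3))"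
    using assms by (simp add: field_simps power2_eq_square power3_eq_cube)
  finally show ?thesis
    by (simp only: diff_ge_0_iff_ge)
qed

section \<open>Discounted sums\<close>

lemma sums_geometric_tail:
  fixes \<delta> K :: real and u :: "nat \<Rightarrow> real"
  assumes "0 \<le> \<delta>" and "\<delta> < 1" and "\<And>t. T < t \<Longrightarrow> u t = \<delta> ^ t * K"
  shows "u sums (\<delta> ^ Suc T * K / (1 - \<delta>) + (\<Sum>t<Suc T. u t))"
proof -
  have "(\<lambda>t. \<delta> ^ t * (\<delta> ^ Suc T * K)) sums (1 / (1 - \<delta>) * (\<delta> ^ Suc T * K))"
    using assms by (intro sums_mult2 geometric_sums) auto
  moreover have "(\<lambda>t. u (t + Suc T)) = (\<lambda>t. \<delta> ^ t * (\<delta> ^ Suc T * K))"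
    using assms(3) by (auto simp: power_add)
  ultimately have "(\<lambda>t. u (t + Suc T)) sums (\<delta> ^ Suc T * K / (1 - \<delta>))"
    by simp
  then show ?thesis
    by (rule sums_iff_shift[THEN iffD1])
qed

lemma grim_trigger_sums:
  fixes \<delta> a b c :: real
  assumes "0 \<le> \<delta>" and "\<delta> < 1" and "a \<le> (1 - \<delta>) * b + \<delta> * c"
  shows "\<exists>v. (\<lambda>t. \<delta> ^ t * (if t < T then a else if t = T then b else c)) sums v \<and> a / (1 - \<delta>) \<le> v"
proof -
  let ?f = "\<lambda>t. \<delta> ^ t * (if t < T then a else if t = T then b else c)"
  have a_sums: "(\<lambda>t. \<delta> ^ t * a) sums (\<delta> ^ Suc T * a / (1 - \<delta>) + (\<Sum>t<Suc T. \<delta> ^ t * a))"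
    using assms by (intro sums_geometric_tail) auto
  have "(\<lambda>t. \<delta> ^ t * a) sums (1 / (1 - \<delta>) * a)"
    using assms by (intro sums_mult2 geometric_sums) auto
  then have "1 / (1 - \<delta>) * a = \<delta> ^ Suc T * a / (1 - \<delta>) + (\<Sum>t<Suc T. \<delta> ^ t * a)"
    by (rule sums_unique2[OF _ a_sums])
  then have a_val: "a / (1 - \<delta>) = \<delta> ^ Suc T * a / (1 - \<delta>) + (\<Sum>t<T. \<delta> ^ t * a) + \<delta> ^ T * a"
    by simp
  have "0 \<le> \<delta> ^ T / (1 - \<delta>) * ((1 - \<delta>) * b + \<delta> * c - a)"
    using assms by simp
  also have "\<dots> = (\<delta> ^ Suc T * c / (1 - \<delta>) + \<delta> ^ T * b) - (\<delta> ^ Suc T * a / (1 - \<delta>) + \<delta> ^ T * a)"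
  proof -
    have "1 - \<delta> \<noteq> 0"
      using assms(2) by simp
    then show ?thesis
      by (simp add: divide_simps) (simp add: algebra_simps)
  qed
  finally have "a / (1 - \<delta>) \<le> \<delta> ^ Suc T * c / (1 - \<delta>) + (\<Sum>t<Suc T. ?f t)"
    by (simp add: a_val)
  moreover have "?f sums (\<delta> ^ Suc T * c / (1 - \<delta>) + (\<Sum>t<Suc T. ?f t))"
    using assms by (intro sums_geometric_tail) auto
  ultimately show ?thesis
    by blast
qed

lemma suminf_ereal_discounted_excess:
  fixes \<delta> c v :: real and f :: "nat \<Rightarrow> real"
  assumes "0 \<le> \<delta>" and "\<delta> < 1" and "(\<lambda>t. \<delta> ^ t * f t) sums v"
  shows "(\<Sum>t. ereal (\<delta> ^ t) * (ereal (f t) - ereal c)) = ereal (v - c / (1 - \<delta>))"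
proof -
  have "(\<lambda>t. \<delta> ^ t * c) sums (1 / (1 - \<delta>) * c)"
    using assms by (intro sums_mult2 geometric_sums) auto
  then have "(\<lambda>t. \<delta> ^ t * f t - \<delta> ^ t * c) sums (v - c / (1 - \<delta>))"
    using assms(3) by (simp add: sums_diff)
  then have "(\<lambda>t. ereal (\<delta> ^ t * (f t - c))) sums ereal (v - c / (1 - \<delta>))"
    by (simp add: sums_ereal right_diff_distrib)
  then show ?thesis
    by (simp add: sums_iff)
qed

lemma le_convex_comb_of_ratio_le:
  fixes c l s \<delta> :: real
  assumes "l < s" and "(c - l) / (s - l) \<le> \<delta>"
  shows "c \<le> (1 - \<delta>) * l + \<delta> * s"
proof -
  have "c - l \<le> \<delta> * (s - l)"
    using assms by (simp add: divide_le_eq)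
  then show ?thesis
    by (simp add: algebra_simps)
qed

section \<open>Plays of the grim-trigger strategy\<close>

definition compliant :: "nat \<Rightarrow> (nat \<Rightarrow> real) \<Rightarrow> history \<Rightarrow> bool" where
  "compliant N x h \<longleftrightarrow> (\<forall>y\<in>set h. \<forall>j\<in>{1..N}. y j = x j)"

lemma trigger_eq: "trigger N xs xc i h = (if compliant N xc h then xc i else xs i)"
  by (simp add: trigger_def compliant_def)

lemma hist_from_Suc_play: "hist_from \<sigma> h (Suc t) = hist_from \<sigma> h t @ [play \<sigma> h t]"
  by (simp add: play_def)

lemma set_hist_from_mono: "t \<le> t' \<Longrightarrow> set (hist_from \<sigma> h t) \<subseteq> set (hist_from \<sigma> h t')"
  by (induction t') (auto simp: le_Suc_eq)

lemma compliant_hist_fromD: "compliant N x (hist_from \<sigma> h t) \<Longrightarrow> compliant N x h"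
  using set_hist_from_mono[of 0 t \<sigma> h] by (auto simp: compliant_def)

lemma compliant_hist_from_Suc:
  "compliant N x (hist_from \<sigma> h (Suc t)) \<longleftrightarrow>
     compliant N x (hist_from \<sigma> h t) \<and> (\<forall>j\<in>{1..N}. play \<sigma> h t j = x j)"
  unfolding hist_from_Suc_play compliant_def by auto

lemma play_trigger:
  "play (trigger N xs xc) h t = (if compliant N xc (hist_from (trigger N xs xc) h t) then xc else xs)"
  by (cases "compliant N xc (hist_from (trigger N xs xc) h t)")
    (simp_all add: play_def trigger_eq fun_eq_iff)

lemma play_trigger_deviation:
  "play ((trigger N xs xc)(n := \<tau>)) h t =
     (if compliant N xc (hist_from ((trigger N xs xc)(n := \<tau>)) h t) then xc else xs)
       (n := \<tau> (hist_from ((trigger N xs xc)(n := \<tau>)) h t))"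
  by (cases "compliant N xc (hist_from ((trigger N xs xc)(n := \<tau>)) h t)")
    (simp_all add: play_def trigger_eq fun_eq_iff)

lemma play_trigger_on_path:
  assumes "compliant N xc h"
  shows "play (trigger N xs xc) h t = xc"
proof -
  have "compliant N xc (hist_from (trigger N xs xc) h t)"
    using assms by (induction t)
      (simp_all add: compliant_hist_from_Suc play_trigger del: hist_from.simps(2))
  then show ?thesis
    by (simp add: play_trigger)
qed

lemma play_trigger_off_path:
  assumes "\<not> compliant N xc h"
  shows "play (trigger N xs xc) h t = xs"
    and "play ((trigger N xs xc)(n := \<tau>)) h t =
           xs(n := \<tau> (hist_from ((trigger N xs xc)(n := \<tau>)) h t))"
  using assms compliant_hist_fromD by (simp_all add: play_trigger play_trigger_deviation) blast+

lemma play_trigger_deviation_cases: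
  fixes N n :: nat and xs xc :: "nat \<Rightarrow> real" and \<tau> :: strategy
  defines "\<sigma>' \<equiv> (trigger N xs xc)(n := \<tau>)"
  assumes "compliant N xc h" and "n \<in> {1..N}"
  obtains "\<forall>t. play \<sigma>' h t = xc"
  | T where "\<forall>t<T. play \<sigma>' h t = xc"
      and "play \<sigma>' h T = xc(n := \<tau> (hist_from \<sigma>' h T))"
      and "\<forall>t>T. play \<sigma>' h t = xs(n := \<tau> (hist_from \<sigma>' h t))"
proof -
  let ?H = "hist_from \<sigma>' h"
  have play: "play \<sigma>' h t = (if compliant N xc (?H t) then xc else xs)(n := \<tau> (?H t))" for t
    unfolding \<sigma>'_def by (rule play_trigger_deviation)
  have on_path: "compliant N xc (?H t)" if "\<forall>t'<t. \<tau> (?H t') = xc n" for t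
    using that
  proof (induction t)
    case (Suc t)
    then show ?case
      by (simp add: compliant_hist_from_Suc play del: hist_from.simps(2))
  qed (simp add: assms(2))
  show ?thesis
  proof (cases "\<forall>t. \<tau> (?H t) = xc n")
    case True
    then show ?thesis
      using on_path play that(1) by simp
  next
    case False
    define T where "T = (LEAST t. \<tau> (?H t) \<noteq> xc n)"
    have before: "\<tau> (?H t) = xc n" if "t < T" for t
      using that not_less_Least unfolding T_def by blast
    have at_T: "\<tau> (?H T) \<noteq> xc n"
      using False LeastI_ex unfolding T_def by (metis (mono_tags, lifting))
    have path_T: "compliant N xc (?H t)" if "t \<le> T" for t
      using that before by (intro on_path) auto
    have after: "\<not> compliant N xc (?H t)" if "T < t" for t
    proof -
      have "play \<sigma>' h T \<in> set (?H t)"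
        using set_hist_from_mono[of "Suc T" t \<sigma>' h] that
        by (auto simp: hist_from_Suc_play simp del: hist_from.simps(2))
      moreover have "play \<sigma>' h T n \<noteq> xc n"
        using path_T[of T] at_T by (simp add: play)
      ultimately show ?thesis
        using assms(3) unfolding compliant_def by fastforce
    qed
    show ?thesis
      by (rule that(2)[of T]) (use before path_T after in \<open>auto simp: play\<close>)
  qed
qed

section \<open>The cooperative profile\<close>

lemma divide_inverse_sqrt_diff:
  fixes S c y :: real
  assumes "0 < S" and "0 < c" and "0 < y"
  shows "y / (1 / sqrt S - 1 / sqrt (S + c * y))
    = sqrt S * sqrt (S + c * y) * (sqrt (S + c * y) + sqrt S) / c"
proof -
  define a b where "a = sqrt S" and "b = sqrt (S + c * y)"
  have ab: "0 < a" "a < b"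
    using assms by (simp_all add: a_def b_def)
  have "c * y = (b - a) * (b + a)"
    using assms by (simp add: a_def b_def algebra_simps flip: power2_eq_square)
  then have y_eq: "y = (b - a) * (b + a) / c"
    using assms(2) by (simp add: field_simps)
  have denom_eq: "1 / a - 1 / b = (b - a) / (a * b)"
    using ab by (simp add: field_simps)
  have "y / (1 / a - 1 / b) = (b - a) * (b + a) / c / ((b - a) / (a * b))"
    by (simp only: y_eq denom_eq)
  also have "\<dots> = a * b * (b + a) / c"
    using ab assms(2) by (simp add: field_simps)
  finally have "y / (1 / a - 1 / b) = a * b * (b + a) / c" .
  then show ?thesis
    by (simp add: a_def b_def)
qed

lemma sqrt_affine_mult_strict_mono:
  fixes S c y1 y2 :: real
  assumes "0 < S" and "0 < c" and "0 \<le> y1" and "y1 < y2"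
  shows "sqrt (S + c * y1) * (sqrt (S + c * y1) + sqrt S)
    < sqrt (S + c * y2) * (sqrt (S + c * y2) + sqrt S)"
proof -
  have "0 \<le> c * y1" and "0 \<le> c * y2" and "sqrt (S + c * y1) < sqrt (S + c * y2)"
    using assms by simp_all
  then show ?thesis
    using assms(1) by (intro mult_strict_mono add_strict_right_mono) auto
qed

text \<open>The paper's threshold x_l^th: S is the total of x^*, c = k - l the number of clients
  that switch to cooperation, and r = \<rho> l / E l.\<close>

definition coop_bound :: "nat \<Rightarrow> real \<Rightarrow> real \<Rightarrow> real \<Rightarrow> real \<Rightarrow> real" where
  "coop_bound G D S c r =
     (if D * sqrt (real G) / (1 / sqrt S - 1 / sqrt (S + c * D)) < r then D
      else THE y. 0 < y \<and> r = sqrt (real G) * y / (1 / sqrt S - 1 / sqrt (S + c * y)))"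

lemma coop_bound_le:
  assumes G: "G \<ge> 1" and S: "0 < S" and c: "0 < c" and D: "0 < D"
    and r: "2 * sqrt (real G * S ^ 3) / c < r"
  shows "coop_bound G D S c r \<le> D"
proof (cases "D * sqrt (real G) / (1 / sqrt S - 1 / sqrt (S + c * D)) < r")
  case True
  then show ?thesis
    by (simp add: coop_bound_def)
next
  case False
  define g where "g y = sqrt (real G) * (sqrt S * sqrt (S + c * y) * (sqrt (S + c * y) + sqrt S) / c)"
    for y
  have g_eq: "sqrt (real G) * y / (1 / sqrt S - 1 / sqrt (S + c * y)) = g y" if "0 < y" for y
    using divide_inverse_sqrt_diff[OF S c that] unfolding g_def by (metis times_divide_eq_right)
  have g_0: "g 0 = 2 * sqrt (real G * S ^ 3) / c"
    using S by (simp add: g_def real_sqrt_mult power3_eq_cube)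
  have g_mono: "g y1 < g y2" if "0 \<le> y1" and "y1 < y2" for y1 y2
    using sqrt_affine_mult_strict_mono[OF S c that] G S c
    by (simp add: g_def divide_strict_right_mono mult.assoc)
  have "r \<le> g D"
    using False g_eq[OF D] by (simp add: mult.commute not_less)
  moreover have "continuous_on {0..D} g"
    unfolding g_def using S c by (intro continuous_intros) auto
  ultimately obtain y where y: "0 \<le> y" "y \<le> D" "g y = r"
    using IVT'[of g 0 r D] g_0 r D by auto
  have "0 < y"
    using y g_0 r by (cases "y = 0") auto
  have "(THE y. 0 < y \<and> r = sqrt (real G) * y / (1 / sqrt S - 1 / sqrt (S + c * y))) = y"
  proof (rule the_equality)
    show "0 < y \<and> r = sqrt (real G) * y / (1 / sqrt S - 1 / sqrt (S + c * y))"
      using \<open>0 < y\<close> y g_eq by simp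
    show "y' = y" if "0 < y' \<and> r = sqrt (real G) * y' / (1 / sqrt S - 1 / sqrt (S + c * y'))"
      for y'
      using that g_eq[of y'] g_mono[of y y'] g_mono[of y' y] y by (cases y' y rule: linorder_cases) auto
  qed
  then show ?thesis
    using False y by (simp add: coop_bound_def)
qed

lemma band_width_ge_two:
  assumes "0 < S" and "l < k" and "r \<le> critical_ratio G S"
    and "2 * sqrt (real G * S ^ 3) / (real k - real l) < r"
  shows "l + 2 \<le> k"
proof (rule ccontr)
  assume "\<not> l + 2 \<le> k"
  then have "real k - real l = 1"
    using assms(2) by simp
  then show False
    using assms critical_ratio_eq_sqrt[of S G] by simp
qed

definition cooperative_improvement :: "nat \<Rightarrow> real \<Rightarrow> (nat \<Rightarrow> real) \<Rightarrow> (nat \<Rightarrow> real) \<Rightarrow> bool" where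
  "cooperative_improvement N D xs xc \<longleftrightarrow>
     (\<forall>i\<in>{1..N}. 0 \<le> xs i \<and> xs i \<le> xc i \<and> xc i \<le> D) \<and>
     (\<forall>n\<in>{1..N}. \<exists>j\<in>{1..N}. j \<noteq> n \<and> xs j < xc j)"

lemma band_cooperative_improvement:
  assumes "1 \<le> l" and "l + 2 \<le> k" and "k \<le> N" and "0 \<le> xk" and "xk \<le> D"
    and "0 < xc" and "xc \<le> D"
    and "\<forall>n\<in>{1..N}. xs n = (if n < k then 0 else if n = k then xk else D)"
    and "\<forall>n\<in>{1..N}. xco n = (if n < l then 0 else if n < k then xc else if n = k then xk else D)"
  shows "cooperative_improvement N D xs xco"
  unfolding cooperative_improvement_def
proof (rule conjI; intro ballI)
  show "0 \<le> xs i \<and> xs i \<le> xco i \<and> xco i \<le> D" if "i \<in> {1..N}" for i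
    using assms that by auto
  show "\<exists>j\<in>{1..N}. j \<noteq> n \<and> xs j < xco j" for n
  proof (cases "n = l")
    case True
    then show ?thesis
      using assms by (intro bexI[of _ "Suc l"]) auto
  next
    case False
    then show ?thesis
      using assms by (intro bexI[of _ l]) auto
  qed
qed

section \<open>The one-shot game\<close>

locale cost_game =
  fixes N G :: nat and D :: real and \<rho> E C :: "nat \<Rightarrow> real" and p :: real
  assumes G_ge_1: "G \<ge> 1" and D_pos: "0 < D"
    and rates_pos: "\<forall>n\<in>{1..N}. 0 < \<rho> n \<and> 0 < E n"
begin

abbreviation F :: "nat \<Rightarrow> (nat \<Rightarrow> real) \<Rightarrow> real" where
  "F \<equiv> cost N G \<rho> E C p"

abbreviation Fx :: "nat \<Rightarrow> (nat \<Rightarrow> real) \<Rightarrow> ereal" where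
  "Fx \<equiv> cost_ext N G \<rho> E C p"

abbreviation base_cost :: "nat \<Rightarrow> real" where
  "base_cost n \<equiv> \<rho> n / real G + C n + p"

lemma rates_pos_at:
  assumes "n \<in> {1..N}"
  shows "0 < \<rho> n" and "0 < E n"
  using rates_pos assms by simp_all

lemma cost_ext_le_fun_upd:
  assumes n: "n \<in> {1..N}" and u0_pos: "0 < total N x"
    and sign: "0 \<le> (z - x n) * (critical_ratio G (total N x) - \<rho> n / E n)"
  shows "Fx n x \<le> Fx n (x(n := z))"
proof (cases "total N (x(n := z)) \<le> 0")
  case True
  then show ?thesis
    by (simp add: cost_ext_def)
next
  case False
  define u0 u where "u0 = total N x" and "u = total N (x(n := z))"
  define s0 s g where "s0 = sqrt u0" and "s = sqrt u" and "g = sqrt (real G)"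
  have u_pos: "0 < u0" "0 < u"
    using False u0_pos by (simp_all add: u0_def u_def)
  have pos: "0 < s0" "0 < s" "0 < g" "0 < \<rho> n" "0 < E n"
    using u_pos G_ge_1 rates_pos_at[OF n] by (simp_all add: s0_def s_def g_def)
  have sq: "s0\<^sup>2 = u0" "s\<^sup>2 = u"
    using u_pos by (simp_all add: s0_def s_def)
  have W: "critical_ratio G u0 = 2 * g * s0 ^ 3"
    unfolding critical_ratio_def g_def s0_def[symmetric] sq(1)[symmetric]
    using pos by (simp add: power2_eq_square power3_eq_cube)
  have "0 \<le> E n * ((z - x n) * (critical_ratio G u0 - \<rho> n / E n)) / critical_ratio G u0"
    using sign pos W by (simp add: u0_def)
  also have "\<dots> = \<rho> n / g * (- (z - x n) / (2 * s0 ^ 3)) + E n * (z - x n)"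
    using pos by (simp add: W field_simps)
  also have "\<dots> \<le> \<rho> n / g * (1 / s - 1 / s0) + E n * (z - x n)"
  proof -
    have "s\<^sup>2 - s0\<^sup>2 = z - x n"
      using total_fun_upd[OF n] by (simp add: sq u_def u0_def)
    then show ?thesis
      using inverse_ge_tangent_square[OF pos(2,1)] pos
      by (intro add_right_mono mult_left_mono) simp_all
  qed
  also have "\<dots> = F n (x(n := z)) - F n x"
    unfolding cost_def u_def[symmetric] u0_def[symmetric] using pos
    by (simp add: real_sqrt_mult g_def[symmetric] s_def[symmetric] s0_def[symmetric] field_simps)
  finally show ?thesis
    using False u0_pos by (simp add: cost_ext_def)
qed

definition best_response :: "nat \<Rightarrow> (nat \<Rightarrow> real) \<Rightarrow> real \<Rightarrow> bool" where
  "best_response n x z \<longleftrightarrow>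
     z \<in> {0..D} \<and> (\<forall>z'\<in>{0..D}. Fx n (x(n := z)) \<le> Fx n (x(n := z')))"

definition one_shot_NE :: "(nat \<Rightarrow> real) \<Rightarrow> bool" where
  "one_shot_NE x \<longleftrightarrow> (\<forall>n\<in>{1..N}. best_response n x (x n))"

lemma one_shot_NE_of_critical_ratio:
  assumes pos: "0 < total N x"
    and range: "\<forall>n\<in>{1..N}. x n \<in> {0..D}"
    and below: "\<forall>n\<in>{1..N}. x n < D \<longrightarrow> \<rho> n / E n \<le> critical_ratio G (total N x)"
    and above: "\<forall>n\<in>{1..N}. 0 < x n \<longrightarrow> critical_ratio G (total N x) \<le> \<rho> n / E n"
  shows "one_shot_NE x"
  unfolding one_shot_NE_def best_response_def
proof (intro ballI conjI)
  fix n z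
  assume n: "n \<in> {1..N}" and z: "z \<in> {0..D}"
  have "0 \<le> (z - x n) * (critical_ratio G (total N x) - \<rho> n / E n)"
  proof (cases "x n = 0")
    case True
    then show ?thesis
      using z n below D_pos by simp
  next
    case False
    then have "0 < x n"
      using range n by force
    show ?thesis
    proof (cases "x n < D")
      case True
      then have "\<rho> n / E n = critical_ratio G (total N x)"
        using \<open>0 < x n\<close> n below above by (meson order_antisym)
      then show ?thesis
        by simp
    next
      case False
      then show ?thesis
        using \<open>0 < x n\<close> n range z above by (intro mult_nonpos_nonpos) auto
    qed
  qed
  then show "Fx n (x(n := x n)) \<le> Fx n (x(n := z))"
    using cost_ext_le_fun_upd[OF n pos] by simp
qed (use range in auto)

lemma one_shot_NE_le:
  assumes "one_shot_NE x" and "n \<in> {1..N}" and "z \<in> {0..D}"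
  shows "Fx n x \<le> Fx n (x(n := z))"
  using assms by (auto simp: one_shot_NE_def best_response_def)

lemma base_cost_le_cost:
  assumes "n \<in> {1..N}" and "0 \<le> x n" and "0 \<le> total N x"
  shows "base_cost n \<le> F n x"
proof -
  have "0 \<le> \<rho> n * (1 / sqrt (real G * total N x)) + E n * x n"
    using assms rates_pos_at[OF assms(1)] by (intro add_nonneg_nonneg mult_nonneg_nonneg) auto
  then show ?thesis
    by (simp add: cost_def algebra_simps)
qed

lemma cost_less_of_total_less:
  assumes "n \<in> {1..N}" and "x n = x' n" and "0 < total N x'" and "total N x' < total N x"
  shows "F n x < F n x'"
proof -
  have "1 / sqrt (real G * total N x) < 1 / sqrt (real G * total N x')"
    using assms G_ge_1 by (intro divide_strict_left_mono) (auto simp: real_sqrt_mult)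
  then show ?thesis
    using assms rates_pos_at[OF assms(1)] by (simp add: cost_def)
qed

lemma cooperative_improvement_gain:
  assumes imp: "cooperative_improvement N D xs xc" and xs_pos: "0 < total N xs"
    and n: "n \<in> {1..N}" and br: "best_response n xc z"
  shows "0 < total N (xc(n := z))" and "F n (xc(n := z)) < F n xs"
proof -
  obtain j where j: "j \<in> {1..N}" "j \<noteq> n" "xs j < xc j"
    using imp n unfolding cooperative_improvement_def by blast
  have range: "\<forall>i\<in>{1..N}. 0 \<le> xs i \<and> xs i \<le> xc i"
    using imp by (simp add: cooperative_improvement_def)
  have "0 < xc j"
    using j range by force
  then have total_upd_pos: "0 < total N (xc(n := w))" if "0 \<le> w" for w
    using that j range by (intro total_pos[of N _ j]) (auto intro: order_trans)
  then show z_pos: "0 < total N (xc(n := z))"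
    using br by (simp add: best_response_def)
  have "total N xs < total N (xc(n := xs n))"
    unfolding total_def using j range by (intro sum_strict_mono_ex1) auto
  then have "F n (xc(n := xs n)) < F n xs"
    using n xs_pos by (intro cost_less_of_total_less) auto
  moreover have "xs n \<in> {0..D}"
    using imp n unfolding cooperative_improvement_def by (meson atLeastAtMost_iff order_trans)
  then have "Fx n (xc(n := z)) \<le> Fx n (xc(n := xs n))"
    using br by (simp add: best_response_def)
  then have "F n (xc(n := z)) \<le> F n (xc(n := xs n))"
    using z_pos total_upd_pos[of "xs n"] range n by (simp add: cost_ext_def)
  ultimately show "F n (xc(n := z)) < F n xs"
    by simp
qed

lemma disc_cost_eq_sums:
  assumes "0 \<le> \<delta>" and "\<delta> < 1" and "\<forall>t. Fx n (P t) = ereal (f t)"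
    and "(\<lambda>t. \<delta> ^ t * f t) sums v"
  shows "disc_cost N G \<rho> E C p \<delta> n P = ereal v"
  using suminf_ereal_discounted_excess[OF assms(1,2,4), of "base_cost n"] assms(3)
  by (simp add: disc_cost_def)

lemma disc_cost_ge_sums:
  assumes "0 \<le> \<delta>" and "\<delta> < 1" and "\<forall>t. base_cost n \<le> f t"
    and "\<forall>t. ereal (f t) \<le> Fx n (P t)" and "(\<lambda>t. \<delta> ^ t * f t) sums v"
  shows "ereal v \<le> disc_cost N G \<rho> E C p \<delta> n P"
proof -
  let ?c = "base_cost n"
  have "ereal (v - ?c / (1 - \<delta>)) = (\<Sum>t. ereal (\<delta> ^ t) * (ereal (f t) - ereal ?c))"
    by (rule suminf_ereal_discounted_excess[OF assms(1,2,5), symmetric])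
  also have "\<dots> \<le> (\<Sum>t. ereal (\<delta> ^ t) * (Fx n (P t) - ereal ?c))"
  proof (rule suminf_le_pos)
    fix t
    show "ereal (\<delta> ^ t) * (ereal (f t) - ereal ?c) \<le> ereal (\<delta> ^ t) * (Fx n (P t) - ereal ?c)"
      using assms by (intro ereal_mult_left_mono ereal_minus_mono) auto
    show "0 \<le> ereal (\<delta> ^ t) * (ereal (f t) - ereal ?c)"
      using assms by simp
  qed
  finally have "ereal (v - ?c / (1 - \<delta>)) + ereal (?c / (1 - \<delta>))
      \<le> (\<Sum>t. ereal (\<delta> ^ t) * (Fx n (P t) - ereal ?c)) + ereal (?c / (1 - \<delta>))"
    by (rule add_right_mono)
  then show ?thesis
    by (simp add: disc_cost_def)
qed

lemma critical_ratio_between_hval: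
  assumes "m \<in> {1..N}" and "m + 1 \<in> {1..N}"
    and "hval G \<rho> E m < S" and "S < hval G \<rho> E (m + 1)"
  shows "0 < S" and "\<rho> m / E m < critical_ratio G S"
    and "critical_ratio G S < \<rho> (m + 1) / E (m + 1)"
proof -
  note hval_m = critical_ratio_hval[of G \<rho> m E, OF G_ge_1 rates_pos_at[OF assms(1)]]
  note hval_m1 = critical_ratio_hval[of G \<rho> "m + 1" E, OF G_ge_1 rates_pos_at[OF assms(2)]]
  show "0 < S"
    using hval_m(1) assms(3) by linarith
  then show "critical_ratio G S < \<rho> (m + 1) / E (m + 1)"
    using critical_ratio_strict_mono[OF G_ge_1, of S "hval G \<rho> E (m + 1)"] hval_m1 assms(4)
    by simp
  show "\<rho> m / E m < critical_ratio G S"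
    using critical_ratio_strict_mono[OF G_ge_1, of "hval G \<rho> E m" S] hval_m assms(3) by simp
qed

lemma step_profile_NE:
  assumes k: "k \<in> {1..N}" and xk: "0 \<le> xk" "xk \<le> D"
    and S: "S = (real N - real k) * D + xk" "0 < S"
    and xs: "\<forall>n\<in>{1..N}. xs n = (if n < k then 0 else if n = k then xk else D)"
    and below: "\<forall>n\<in>{1..N}. n < k \<longrightarrow> \<rho> n / E n \<le> critical_ratio G S"
    and above: "\<forall>n\<in>{1..N}. k < n \<longrightarrow> critical_ratio G S \<le> \<rho> n / E n"
    and at_k: "0 < xk \<longrightarrow> critical_ratio G S \<le> \<rho> k / E k"
      "xk < D \<longrightarrow> \<rho> k / E k \<le> critical_ratio G S"
  shows "one_shot_NE xs" and "total N xs = S"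
proof -
  show total: "total N xs = S"
    using total_step_profile[OF k xs] S by simp
  show "one_shot_NE xs"
    using S xk xs below above at_k D_pos
    by (intro one_shot_NE_of_critical_ratio) (auto simp: total not_less_iff_gr_or_eq)
qed

lemma band_profiles_conditions:
  assumes l: "1 \<le> l" "l < k" and k: "k \<le> N" and xk: "0 \<le> xk" "xk \<le> D"
    and S: "S = (real N - real k) * D + xk" "0 < S"
    and below: "\<forall>n\<in>{1..N}. n < k \<longrightarrow> \<rho> n / E n \<le> critical_ratio G S"
    and above: "\<forall>n\<in>{1..N}. k < n \<longrightarrow> critical_ratio G S \<le> \<rho> n / E n"
    and at_k: "0 < xk \<longrightarrow> critical_ratio G S \<le> \<rho> k / E k"
      "xk < D \<longrightarrow> \<rho> k / E k \<le> critical_ratio G S"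
    and l_rate: "2 * sqrt (real G * S ^ 3) / (real k - real l) < \<rho> l / E l"
    and xc: "0 < xc" "xc \<le> coop_bound G D S (real k - real l) (\<rho> l / E l)"
    and xs: "\<forall>n\<in>{1..N}. xs n = (if n < k then 0 else if n = k then xk else D)"
    and xco: "\<forall>n\<in>{1..N}. xco n =
      (if n < l then 0 else if n < k then xc else if n = k then xk else D)"
  shows "one_shot_NE xs \<and> 0 < total N xs \<and> cooperative_improvement N D xs xco"
proof (intro conjI)
  have k': "k \<in> {1..N}"
    using l k by simp
  show "one_shot_NE xs"
    by (rule step_profile_NE(1)[OF k' xk S xs below above at_k])
  show "0 < total N xs"
    using step_profile_NE(2)[OF k' xk S xs below above at_k] S by simp
  have "l + 2 \<le> k"
    using S l k below l_rate by (intro band_width_ge_two[of S]) auto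
  moreover have "xc \<le> D"
    using xc coop_bound_le[OF G_ge_1 S(2) _ D_pos l_rate] l by simp
  ultimately show "cooperative_improvement N D xs xco"
    using l k xk xc xs xco by (intro band_cooperative_improvement[where xk = xk and xc = xc]) auto
qed

lemma typeA_conditions:
  assumes "typeA N G D \<rho> E xs xco"
    and ord: "\<forall>i\<in>{1..N}. \<forall>j\<in>{1..N}. i \<le> j \<longrightarrow> \<rho> i / E i \<le> \<rho> j / E j"
  shows "one_shot_NE xs \<and> 0 < total N xs \<and> cooperative_improvement N D xs xco"
  using assms(1) unfolding typeA_def
proof (elim bexE, goal_cases)
  case (1 k)
  define S where "S = hval G \<rho> E k"
  define xk where "xk = S - (real N - real k) * D"
  define P where "P = {n \<in> {1..<k}. 2 * sqrt (real G * S ^ 3) / (real k - real n) < \<rho> n / E n}"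
  define l where "l = (LEAST n. n \<in> P)"
  have S_eq: "(real N - real k) * D + xk = S"
    by (simp add: xk_def)
  have S_l: "(real N - real l) * D + xk = S + (real k - real l) * D"
    by (simp add: xk_def algebra_simps)
  note body = 1(2)[unfolded Let_def, folded S_def, folded xk_def, unfolded S_eq, folded P_def,
      folded l_def, unfolded S_l, folded coop_bound_def]
  then obtain xc where xc: "0 < xc" "xc \<le> coop_bound G D S (real k - real l) (\<rho> l / E l)"
    and xco: "\<forall>n\<in>{1..N}. xco n = (if n < l then 0 else if n < k then xc else if n = k then xk else D)"
    by blast
  have "l \<in> P"
    using body LeastI_ex[of "\<lambda>n. n \<in> P"] unfolding l_def by blast
  then have l: "1 \<le> l" "l < k" and l_rate: "2 * sqrt (real G * S ^ 3) / (real k - real l) < \<rho> l / E l"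
    unfolding P_def by auto
  have S_pos: "0 < S" and rate_k: "\<rho> k / E k = critical_ratio G S"
    using critical_ratio_hval[of G \<rho> k E, OF G_ge_1 rates_pos_at[OF 1(1)]] by (simp_all add: S_def)
  show ?case
  proof (rule band_profiles_conditions[OF l _ _ _ S_eq[symmetric] S_pos _ _ _ _ l_rate xc _ xco])
    show "\<forall>n\<in>{1..N}. n < k \<longrightarrow> \<rho> n / E n \<le> critical_ratio G S"
      using ord[rule_format, OF _ 1(1)] rate_k by simp
    show "\<forall>n\<in>{1..N}. k < n \<longrightarrow> critical_ratio G S \<le> \<rho> n / E n"
      using ord[rule_format, OF 1(1)] rate_k by simp
  qed (use body 1(1) rate_k in \<open>auto simp: xk_def algebra_simps\<close>)
qed

text \<open>Type B is the instance k = m + 1, x_k = D of the band layout of type A.\<close>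

lemma typeB_conditions:
  assumes "typeB N G D \<rho> E xs xco"
    and ord: "\<forall>i\<in>{1..N}. \<forall>j\<in>{1..N}. i \<le> j \<longrightarrow> \<rho> i / E i \<le> \<rho> j / E j"
  shows "one_shot_NE xs \<and> 0 < total N xs \<and> cooperative_improvement N D xs xco"
  using assms(1) unfolding typeB_def
proof (elim bexE, goal_cases)
  case (1 m)
  define S where "S = (real N - real m) * D"
  define P where "P = {n \<in> {1..m}. 2 * sqrt (real G * S ^ 3) / (real m - real n + 1) < \<rho> n / E n}"
  define l where "l = (LEAST n. n \<in> P)"
  have S_l: "(real N - real l + 1) * D = S + (real m - real l + 1) * D"
    by (simp add: S_def algebra_simps)
  have c_eq: "real m - real l + 1 = real (m + 1) - real l"
    by simp
  note body = 1(2)[unfolded Let_def, folded S_def, folded P_def, folded l_def, unfolded S_l,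
      folded coop_bound_def, unfolded c_eq]
  then obtain xc where xc: "0 < xc" "xc \<le> coop_bound G D S (real (m + 1) - real l) (\<rho> l / E l)"
    and xco: "\<forall>n\<in>{1..N}. xco n = (if n < l then 0 else if n \<le> m then xc else D)"
    by blast
  have xs: "\<forall>n\<in>{1..N}. xs n = (if n \<le> m then 0 else D)"
    using body by blast
  have "l \<in> P"
    using body LeastI_ex[of "\<lambda>n. n \<in> P"] unfolding l_def by blast
  then have l: "1 \<le> l" "l < m + 1"
    and l_rate: "2 * sqrt (real G * S ^ 3) / (real (m + 1) - real l) < \<rho> l / E l"
    unfolding P_def c_eq[symmetric] by auto
  have m: "m \<in> {1..N}" "m + 1 \<in> {1..N}"
    using 1(1) by auto
  have S_pos: "0 < S" and below_m: "\<rho> m / E m < critical_ratio G S"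
    and above_m: "critical_ratio G S < \<rho> (m + 1) / E (m + 1)"
    using critical_ratio_between_hval[OF m] body by blast+
  show ?case
  proof (rule band_profiles_conditions[OF l _ _ _ _ S_pos _ _ _ _ l_rate xc])
    show "\<forall>n\<in>{1..N}. n < m + 1 \<longrightarrow> \<rho> n / E n \<le> critical_ratio G S"
      using ord[rule_format, OF _ m(1)] below_m by force
    show "\<forall>n\<in>{1..N}. m + 1 < n \<longrightarrow> critical_ratio G S \<le> \<rho> n / E n"
      using ord[rule_format, OF m(2)] above_m by force
  qed (use xs xco m above_m D_pos in \<open>auto simp: S_def algebra_simps\<close>)
qed

end

section \<open>The repeated game\<close>

text \<open>The assumption no_gain compares cooperating forever with deviating once to the best
  response y n and being punished by x^* ever after (both normalised by 1 - \<delta>).\<close>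

locale grim_trigger = cost_game +
  fixes xs xc y :: "nat \<Rightarrow> real" and \<delta> :: real
  assumes discount: "0 \<le> \<delta>" "\<delta> < 1"
    and profiles_range: "\<forall>i\<in>{1..N}. xs i \<in> {0..D} \<and> xc i \<in> {0..D}"
    and NE: "one_shot_NE xs"
    and totals_pos: "0 < total N xs" "0 < total N xc"
    and best_resp: "\<forall>n\<in>{1..N}. best_response n xc (y n) \<and> 0 < total N (xc(n := y n))"
    and no_gain: "\<forall>n\<in>{1..N}. F n xc \<le> (1 - \<delta>) * F n (xc(n := y n)) + \<delta> * F n xs"
begin

abbreviation V :: "nat \<Rightarrow> (nat \<Rightarrow> nat \<Rightarrow> real) \<Rightarrow> ereal" where
  "V \<equiv> disc_cost N G \<rho> E C p \<delta>"

lemma discounted_constant_sums: "(\<lambda>t. \<delta> ^ t * a) sums (a / (1 - \<delta>))"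
  using sums_mult2[OF geometric_sums, of \<delta> a] discount by simp

lemma trigger_no_gain_off_path:
  assumes n: "n \<in> {1..N}" and \<tau>: "\<forall>h'. \<tau> h' \<in> {0..D}" and off: "\<not> compliant N xc h"
  shows "V n (play (trigger N xs xc) h) \<le> V n (play ((trigger N xs xc)(n := \<tau>)) h)"
proof -
  have Fx_xs: "Fx n xs = ereal (F n xs)"
    using totals_pos by (simp add: cost_ext_def)
  have "V n (play (trigger N xs xc) h) = ereal (F n xs / (1 - \<delta>))"
    by (rule disc_cost_eq_sums[OF discount _ discounted_constant_sums])
      (simp add: Fx_xs play_trigger_off_path(1)[OF off])
  also have "\<dots> \<le> V n (play ((trigger N xs xc)(n := \<tau>)) h)"
  proof (rule disc_cost_ge_sums[OF discount _ _ discounted_constant_sums])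
    show "\<forall>t. base_cost n \<le> F n xs"
      using n profiles_range totals_pos base_cost_le_cost[of n xs] by simp
    show "\<forall>t. ereal (F n xs) \<le> Fx n (play ((trigger N xs xc)(n := \<tau>)) h t)"
      using one_shot_NE_le[OF NE n] \<tau> Fx_xs by (simp add: play_trigger_off_path(2)[OF off])
  qed
  finally show ?thesis .
qed

lemma trigger_no_gain_on_path:
  assumes n: "n \<in> {1..N}" and \<tau>: "\<forall>h'. \<tau> h' \<in> {0..D}" and on: "compliant N xc h"
  shows "V n (play (trigger N xs xc) h) \<le> V n (play ((trigger N xs xc)(n := \<tau>)) h)"
  using on n
proof (cases rule: play_trigger_deviation_cases[where xs = xs and \<tau> = \<tau>])
  case 1
  then have "play ((trigger N xs xc)(n := \<tau>)) h = play (trigger N xs xc) h"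
    using play_trigger_on_path[OF on] by (intro ext) simp
  then show ?thesis
    by simp
next
  case (2 T)
  let ?\<sigma>' = "(trigger N xs xc)(n := \<tau>)"
  define Fc Fl Fs where "Fc = F n xc" and "Fl = F n (xc(n := y n))" and "Fs = F n xs"
  have br: "best_response n xc (y n)" and total_y: "0 < total N (xc(n := y n))"
    using best_resp n by auto
  have Fx: "Fx n xc = ereal Fc" "Fx n (xc(n := y n)) = ereal Fl" "Fx n xs = ereal Fs"
    using totals_pos total_y by (simp_all add: cost_ext_def Fc_def Fl_def Fs_def)
  have base: "base_cost n \<le> Fc" "base_cost n \<le> Fl" "base_cost n \<le> Fs"
    using n profiles_range totals_pos br total_y base_cost_le_cost[of n]
    by (auto simp: Fc_def Fl_def Fs_def best_response_def)
  obtain v where v: "(\<lambda>t. \<delta> ^ t * (if t < T then Fc else if t = T then Fl else Fs)) sums v"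
    and Fc_v: "Fc / (1 - \<delta>) \<le> v"
    using grim_trigger_sums[OF discount, of Fc Fl Fs T] no_gain n
    by (auto simp: Fc_def Fl_def Fs_def)
  have "V n (play (trigger N xs xc) h) = ereal (Fc / (1 - \<delta>))"
    by (rule disc_cost_eq_sums[OF discount _ discounted_constant_sums])
      (simp add: Fx play_trigger_on_path[OF on])
  also have "\<dots> \<le> ereal v"
    using Fc_v by simp
  also have "\<dots> \<le> V n (play ?\<sigma>' h)"
  proof (rule disc_cost_ge_sums[OF discount _ _ v])
    show "\<forall>t. base_cost n \<le> (if t < T then Fc else if t = T then Fl else Fs)"
      using base by simp
    have deviate: "Fx n (xc(n := y n)) \<le> Fx n (xc(n := \<tau> (hist_from ?\<sigma>' h T)))"
      using br \<tau> by (simp add: best_response_def)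
    have punish: "Fx n xs \<le> Fx n (xs(n := \<tau> (hist_from ?\<sigma>' h t)))" for t
      using one_shot_NE_le[OF NE n] \<tau> by simp
    show "\<forall>t. ereal (if t < T then Fc else if t = T then Fl else Fs) \<le> Fx n (play ?\<sigma>' h t)"
    proof
      fix t
      consider "t < T" | "t = T" | "T < t"
        by linarith
      then show "ereal (if t < T then Fc else if t = T then Fl else Fs) \<le> Fx n (play ?\<sigma>' h t)"
        by cases (use 2 Fx deviate punish in simp_all)
    qed
  qed
  finally show ?thesis .
qed

theorem trigger_is_SPNE: "is_SPNE N G D \<rho> E C p \<delta> (trigger N xs xc)"
  unfolding is_SPNE_def
proof (intro conjI allI impI ballI)
  show "trigger N xs xc i h \<in> {0..D}" if "i \<in> {1..N}" for i h
    using profiles_range that by (simp add: trigger_eq)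
  show "V n (play (trigger N xs xc) h) \<le> V n (play ((trigger N xs xc)(n := \<tau>)) h)"
    if "n \<in> {1..N}" and "\<forall>h'. \<tau> h' \<in> {0..D}" for h n \<tau>
    using trigger_no_gain_on_path[OF that] trigger_no_gain_off_path[OF that] by blast
qed

end

context cost_game
begin

lemma grim_trigger_of_improvement:
  assumes "0 \<le> \<delta>" and "\<delta> < 1"
    and NE: "one_shot_NE xs" and xs_pos: "0 < total N xs"
    and imp: "cooperative_improvement N D xs xc"
    and br: "\<forall>n\<in>{1..N}. best_response n xc (y n)"
    and \<delta>_ge: "Max (delta_th N G \<rho> E C p xs xc y ` {1..N}) \<le> \<delta>"
  shows "grim_trigger N G D \<rho> E C p xs xc y \<delta>"
proof unfold_locales
  show "\<forall>i\<in>{1..N}. xs i \<in> {0..D} \<and> xc i \<in> {0..D}"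
    using imp by (auto simp: cooperative_improvement_def)
  have "total N xs \<le> total N xc"
    using imp unfolding total_def cooperative_improvement_def by (intro sum_mono) auto
  then show "0 < total N xc"
    using xs_pos by simp
  show "\<forall>n\<in>{1..N}. best_response n xc (y n) \<and> 0 < total N (xc(n := y n))"
    using br cooperative_improvement_gain(1)[OF imp xs_pos] by blast
  show "\<forall>n\<in>{1..N}. F n xc \<le> (1 - \<delta>) * F n (xc(n := y n)) + \<delta> * F n xs"
  proof
    fix n
    assume n: "n \<in> {1..N}"
    have "delta_th N G \<rho> E C p xs xc y n \<le> \<delta>"
      using n \<delta>_ge by (meson Max_ge finite_atLeastAtMost finite_imageI image_eqI order_trans)
    then show "F n xc \<le> (1 - \<delta>) * F n (xc(n := y n)) + \<delta> * F n xs"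
      using cooperative_improvement_gain(2)[OF imp xs_pos n] br n
      by (intro le_convex_comb_of_ratio_le) (auto simp: delta_th_def)
  qed
qed (use assms in auto)

end

theorem theorem5:
  fixes N G :: nat and D p \<delta> :: real
    and \<rho> E C xstar xcoop y :: "nat \<Rightarrow> real"
  assumes "G \<ge> 1" and "D > 0"
    and "\<forall>n\<in>{1..N}. \<rho> n > 0 \<and> E n > 0"
    and "\<forall>i\<in>{1..N}. \<forall>j\<in>{1..N}. i \<le> j \<longrightarrow> \<rho> i / E i \<le> \<rho> j / E j"
    and "typeA N G D \<rho> E xstar xcoop \<or> typeB N G D \<rho> E xstar xcoop"
    and "\<forall>n\<in>{1..N}. y n \<in> {0..D} \<and>
           (\<forall>z\<in>{0..D}. cost_ext N G \<rho> E C p n (xcoop(n := y n))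
                           \<le> cost_ext N G \<rho> E C p n (xcoop(n := z)))"
    and "0 \<le> \<delta>" and "\<delta> < 1"
    and "\<delta> \<ge> Max ((delta_th N G \<rho> E C p xstar xcoop y) ` {1..N})"
  shows "is_SPNE N G D \<rho> E C p \<delta> (trigger N xstar xcoop)"
proof -
  interpret cost_game N G D \<rho> E C p
    using assms(1-3) by unfold_locales auto
  have "one_shot_NE xstar \<and> 0 < total N xstar \<and> cooperative_improvement N D xstar xcoop"
    using assms(5) typeA_conditions[OF _ assms(4)] typeB_conditions[OF _ assms(4)] by blast
  moreover have "\<forall>n\<in>{1..N}. best_response n xcoop (y n)"
    using assms(6) by (simp add: best_response_def)
  ultimately interpret grim_trigger N G D \<rho> E C p xstar xcoop y \<delta>
    using assms(7-9) by (intro grim_trigger_of_improvement) auto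
  show ?thesis
    by (rule trigger_is_SPNE)
qed

end
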